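(* Let $\nu>0$, $\sigma>0$, $\varepsilon\in(-1,1)$ be fixed (known) and let $\rho(u)=\frac{\nu+1}{2}\log\big(1+\frac{u^2}{\nu(1-\operatorname{sign}(u)\varepsilon)^2}\big)$. For a sample $x_1,\dots,x_n$, let $T_n(x_1,\dots,x_n)$ be any minimizer over $t\in\mathbb{R}$ of $\sum_{i=1}^n\rho\big(\frac{x_i-t}{\sigma}\big)$ (the ML estimator of the location $\theta$ in $ESt(\theta,\sigma,\varepsilon,\nu)$ with $\sigma,\varepsilon,\nu$ known). Then the breakdown point of $T_n$ is $1/2$, in the sense that its finite-sample replacement breakdown point tends to $1/2$ as $n\to\infty$.
   Context: $\operatorname{sign}(t)=1$ for $t\ge0$, $-1$ for $t<0$. $\rho$ equals $-\log f_{ESt}$ up to an additive constant, where $f_{ESt}(x)\propto\big(1+\frac{(x-\theta)^2}{\nu(1-\operatorname{sign}(x-\theta)\varepsilon)^2\sigma^2}\big)^{-(\nu+1)/2}$. The finite-sample replacement breakdown point of $T_n$ at a sample $X$ is $\min\{m/n:\ \sup|T_n(X')|=\infty\}$, the supremum over all samples $X'$ obtained from $X$ by replacing $m$ of the $n$ points by arbitrary values. *)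

theory Defs
  imports Complex_Main
begin

text \<open>Sign convention of the paper: sign t = 1 for t >= 0, -1 for t < 0.\<close>
definition esign :: "real \<Rightarrow> real" where
  "esign t = (if t \<ge> 0 then 1 else -1)"

definition rho_ESt :: "real \<Rightarrow> real \<Rightarrow> real \<Rightarrow> real" where
  "rho_ESt nu eps u = (nu + 1) / 2 * ln (1 + u\<^sup>2 / (nu * (1 - esign u * eps)\<^sup>2))"

definition mle_objective :: "real \<Rightarrow> real \<Rightarrow> real \<Rightarrow> real list \<Rightarrow> real \<Rightarrow> real" where
  "mle_objective nu sigma eps xs t = (\<Sum>x\<leftarrow>xs. rho_ESt nu eps ((x - t) / sigma))"

definition is_mle_location_estimator ::
  "real \<Rightarrow> real \<Rightarrow> real \<Rightarrow> (real list \<Rightarrow> real) \<Rightarrow> bool" where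
  "is_mle_location_estimator nu sigma eps T \<longleftrightarrow>
     (\<forall>xs t. mle_objective nu sigma eps xs (T xs) \<le> mle_objective nu sigma eps xs t)"

definition replacements :: "real list \<Rightarrow> nat \<Rightarrow> real list set" where
  "replacements X m = {X'. length X' = length X \<and>
      card {i. i < length X \<and> X' ! i \<noteq> X ! i} \<le> m}"

definition breakdown_point :: "(real list \<Rightarrow> real) \<Rightarrow> real list \<Rightarrow> real" where
  "breakdown_point T X = Inf {real m / real (length X) | m.
      m \<le> length X \<and> \<not> bdd_above ((\<lambda>X'. \<bar>T X'\<bar>) ` replacements X m)}"

end

(*
  The loss rho_ESt nu eps is squeezed between (nu+1)/2 times two symmetric Student losses
  ln (1 + u^2/K) with K = nu (1 -+ |eps|)^2, whose difference is bounded.  Up to additive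
  constants it is therefore monotone in |u| and subadditive (ln 2 is the defect), and its
  sublevel sets are bounded.  For every such loss, with m of n points replaced:
  if 2m < n, pushing the estimate t away from the clean data costs each of the more than
  n/2 clean points about rho t but gains at most rho t on each replaced point, so t stays
  bounded; if 2m > n, moving the m replaced points far out forces the minimizer to follow
  them.  Hence the breakdown point lies between 1/2 and (n div 2 + 1)/n <= 1/2 + 1/n.
*)
theory Submission
  imports Defs
begin

definition student_loss :: "real \<Rightarrow> real \<Rightarrow> real" where
  "student_loss K u = ln (1 + u\<^sup>2 / K)"

context
  fixes K :: real
  assumes K_pos: "K > 0"
begin

lemma student_loss_nonneg: "student_loss K u \<ge> 0"
  using K_pos by (simp add: student_loss_def)

lemma student_loss_mono:
  assumes "\<bar>u\<bar> \<le> \<bar>v\<bar>"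
  shows "student_loss K u \<le> student_loss K v"
proof -
  have "u\<^sup>2 \<le> v\<^sup>2"
    using assms by (simp add: abs_le_square_iff)
  then show ?thesis
    using K_pos by (simp add: student_loss_def divide_right_mono add_pos_nonneg)
qed

lemma student_loss_add_le:
  "student_loss K (u + v) \<le> student_loss K u + student_loss K v + ln 2"
proof -
  define a b where "a = u\<^sup>2 / K" and "b = v\<^sup>2 / K"
  have "a \<ge> 0" "b \<ge> 0"
    using K_pos by (simp_all add: a_def b_def)
  have "(u + v)\<^sup>2 + (u - v)\<^sup>2 = 2 * u\<^sup>2 + 2 * v\<^sup>2"
    by (simp add: power2_eq_square algebra_simps)
  then have "(u + v)\<^sup>2 \<le> 2 * u\<^sup>2 + 2 * v\<^sup>2"
    by (metis le_add_same_cancel1 zero_le_power2)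
  then have "(u + v)\<^sup>2 / K \<le> (2 * u\<^sup>2 + 2 * v\<^sup>2) / K"
    using K_pos by (simp add: divide_right_mono)
  also have "\<dots> = 2 * a + 2 * b"
    by (simp add: a_def b_def add_divide_distrib)
  also have "\<dots> \<le> 1 + 2 * a + 2 * b + 2 * (a * b)"
    using \<open>a \<ge> 0\<close> \<open>b \<ge> 0\<close> by simp
  finally have "1 + (u + v)\<^sup>2 / K \<le> 2 * ((1 + a) * (1 + b))"
    by (simp add: algebra_simps)
  then have "student_loss K (u + v) \<le> ln (2 * ((1 + a) * (1 + b)))"
    using K_pos \<open>a \<ge> 0\<close> \<open>b \<ge> 0\<close> by (simp add: student_loss_def add_pos_nonneg)
  also have "\<dots> = ln 2 + student_loss K u + student_loss K v"
    using \<open>a \<ge> 0\<close> \<open>b \<ge> 0\<close> by (simp add: student_loss_def a_def b_def ln_mult_pos)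
  finally show ?thesis
    by simp
qed

lemma student_loss_le_imp_abs_le:
  assumes "student_loss K u \<le> B"
  shows "\<bar>u\<bar> \<le> sqrt (K * exp B)"
proof -
  have "exp (student_loss K u) \<le> exp B"
    using assms by simp
  then have "1 + u\<^sup>2 / K \<le> exp B"
    using K_pos by (simp add: student_loss_def add_pos_nonneg)
  then have "u\<^sup>2 \<le> K * exp B"
    using K_pos by (simp add: field_simps)
  then show ?thesis
    using real_sqrt_le_mono by fastforce
qed

lemma student_loss_antimono_scale:
  assumes "K \<le> K'"
  shows "student_loss K' u \<le> student_loss K u"
  using assms K_pos by (simp add: student_loss_def frac_le add_pos_nonneg)

lemma student_loss_le_scale:
  assumes "K \<le> K'"
  shows "student_loss K u \<le> ln (K' / K) + student_loss K' u"
proof -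
  have "1 + u\<^sup>2 / K \<le> K' / K * (1 + u\<^sup>2 / K')"
    using assms K_pos by (simp add: field_simps)
  then have "student_loss K u \<le> ln (K' / K * (1 + u\<^sup>2 / K'))"
    using K_pos assms by (simp add: student_loss_def add_pos_nonneg)
  also have "\<dots> = ln (K' / K) + student_loss K' u"
  proof -
    have "K' / K > 0" "1 + u\<^sup>2 / K' > 0"
      using K_pos assms by (auto intro: add_pos_nonneg)
    then show ?thesis
      unfolding student_loss_def by (rule ln_mult_pos)
  qed
  finally show ?thesis .
qed

end

lemma rho_ESt_bounds:
  assumes nu: "nu > 0" and eps: "\<bar>eps\<bar> < 1"
  shows "(nu + 1) / 2 * student_loss (nu * (1 + \<bar>eps\<bar>)\<^sup>2) u \<le> rho_ESt nu eps u"
    and "rho_ESt nu eps u \<le> (nu + 1) / 2 * student_loss (nu * (1 - \<bar>eps\<bar>)\<^sup>2) u"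
proof -
  define a where "a = 1 - esign u * eps"
  have a: "1 - \<bar>eps\<bar> \<le> a" "a \<le> 1 + \<bar>eps\<bar>"
    by (auto simp: a_def esign_def)
  have "(1 - \<bar>eps\<bar>)\<^sup>2 \<le> a\<^sup>2" "a\<^sup>2 \<le> (1 + \<bar>eps\<bar>)\<^sup>2"
    using a eps by (auto intro!: power_mono)
  then have "nu * (1 - \<bar>eps\<bar>)\<^sup>2 \<le> nu * a\<^sup>2" "nu * a\<^sup>2 \<le> nu * (1 + \<bar>eps\<bar>)\<^sup>2"
    using nu by simp_all
  moreover have "nu * (1 - \<bar>eps\<bar>)\<^sup>2 > 0" "nu * a\<^sup>2 > 0"
    using nu eps a by auto
  ultimately have "student_loss (nu * (1 + \<bar>eps\<bar>)\<^sup>2) u \<le> student_loss (nu * a\<^sup>2) u"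
    and "student_loss (nu * a\<^sup>2) u \<le> student_loss (nu * (1 - \<bar>eps\<bar>)\<^sup>2) u"
    by (simp_all add: student_loss_antimono_scale)
  moreover have "rho_ESt nu eps u = (nu + 1) / 2 * student_loss (nu * a\<^sup>2) u"
    by (simp add: rho_ESt_def student_loss_def a_def)
  ultimately show "(nu + 1) / 2 * student_loss (nu * (1 + \<bar>eps\<bar>)\<^sup>2) u \<le> rho_ESt nu eps u"
    and "rho_ESt nu eps u \<le> (nu + 1) / 2 * student_loss (nu * (1 - \<bar>eps\<bar>)\<^sup>2) u"
    using nu by simp_all
qed

definition M_objective :: "(real \<Rightarrow> real) \<Rightarrow> real list \<Rightarrow> real \<Rightarrow> real" where
  "M_objective \<rho> xs t = (\<Sum>x\<leftarrow>xs. \<rho> (x - t))"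

definition is_M_estimator :: "(real \<Rightarrow> real) \<Rightarrow> (real list \<Rightarrow> real) \<Rightarrow> bool" where
  "is_M_estimator \<rho> T \<longleftrightarrow> (\<forall>xs t. M_objective \<rho> xs (T xs) \<le> M_objective \<rho> xs t)"

lemma M_objective_nth: "M_objective \<rho> xs t = (\<Sum>i<length xs. \<rho> (xs ! i - t))"
  by (simp add: M_objective_def sum_list_sum_nth atLeast0LessThan)

lemma is_mle_location_estimator_iff:
  "is_mle_location_estimator nu sigma eps T \<longleftrightarrow>
     is_M_estimator (\<lambda>v. rho_ESt nu eps (v / sigma)) T"
  by (simp add: is_mle_location_estimator_def is_M_estimator_def mle_objective_def M_objective_def)

lemma replace_prefix_in_replacements:
  assumes "m \<le> length Y"
  shows "map (\<lambda>i. if i < m then L else Y ! i) [0..<length Y] \<in> replacements Y m"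
proof -
  let ?X' = "map (\<lambda>i. if i < m then L else Y ! i) [0..<length Y]"
  have "{i. i < length Y \<and> ?X' ! i \<noteq> Y ! i} \<subseteq> {..<m}"
    by (auto split: if_splits)
  then have "card {i. i < length Y \<and> ?X' ! i \<noteq> Y ! i} \<le> m"
    using card_mono[of "{..<m}"] by fastforce
  then show ?thesis
    by (simp add: replacements_def)
qed

lemma abs_bounded_list: "\<exists>R. \<forall>y\<in>set (Y :: real list). \<bar>y\<bar> \<le> R"
  by (auto intro!: exI[of _ "\<Sum>y\<leftarrow>Y. \<bar>y\<bar>"] member_le_sum_list)

lemma majority_weight_bound:
  fixes x a b :: real
  assumes "real k * (x - a) \<le> real l * (x + b)" and "l < k" and "x \<ge> 0"
  shows "x \<le> real k * a + real l * b"
proof -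
  have "real l + 1 \<le> real k"
    using assms(2) by (metis Suc_eq_plus1 Suc_leI of_nat_1 of_nat_add of_nat_le_iff)
  then have "x \<le> (real k - real l) * x"
    using mult_right_mono[of 1 "real k - real l" x] assms(3) by simp
  then show ?thesis
    using assms(1) by (simp add: algebra_simps)
qed

locale coercive_subadditive_loss =
  fixes \<rho> :: "real \<Rightarrow> real" and C :: real
  assumes nonneg: "\<rho> u \<ge> 0"
    and zero: "\<rho> 0 = 0"
    and quasi_mono: "\<bar>u\<bar> \<le> \<bar>v\<bar> \<Longrightarrow> \<rho> u \<le> \<rho> v + C"
    and quasi_subadditive: "\<rho> (u + v) \<le> \<rho> u + \<rho> v + C"
    and coercive: "\<exists>M. \<forall>u. \<rho> u \<le> B \<longrightarrow> \<bar>u\<bar> \<le> M"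
begin

lemma rescale:
  assumes "sigma > 0"
  shows "coercive_subadditive_loss (\<lambda>v. \<rho> (v / sigma)) C"
proof unfold_locales
  fix u v B :: real
  show "\<rho> (u / sigma) \<ge> 0"
    by (rule nonneg)
  show "\<rho> (0 / sigma) = 0"
    by (simp add: zero)
  show "\<rho> (u / sigma) \<le> \<rho> (v / sigma) + C" if "\<bar>u\<bar> \<le> \<bar>v\<bar>"
    using that assms by (intro quasi_mono) (simp add: abs_div divide_right_mono)
  show "\<rho> ((u + v) / sigma) \<le> \<rho> (u / sigma) + \<rho> (v / sigma) + C"
    by (simp add: add_divide_distrib quasi_subadditive)
  obtain M where M: "\<And>w. \<rho> w \<le> B \<Longrightarrow> \<bar>w\<bar> \<le> M"
    using coercive by blast
  show "\<exists>M'. \<forall>u. \<rho> (u / sigma) \<le> B \<longrightarrow> \<bar>u\<bar> \<le> M'"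
  proof (intro exI[of _ "sigma * M"] allI impI)
    fix u assume "\<rho> (u / sigma) \<le> B"
    then have "\<bar>u / sigma\<bar> \<le> M"
      by (rule M)
    then show "\<bar>u\<bar> \<le> sigma * M"
      using assms by (simp add: abs_div field_simps)
  qed
qed

lemma C_nonneg: "C \<ge> 0"
  using quasi_mono[of 0 0] zero by simp

lemma exists_large_loss: "\<exists>u>0. B < \<rho> u"
proof -
  obtain M where M: "\<And>u. \<rho> u \<le> B \<Longrightarrow> \<bar>u\<bar> \<le> M"
    using coercive by blast
  have "\<not> \<rho> (\<bar>M\<bar> + 1) \<le> B"
    using M[of "\<bar>M\<bar> + 1"] by linarith
  then show ?thesis
    by (intro exI[of _ "\<bar>M\<bar> + 1"]) auto
qed

lemma loss_shift_inlier:
  assumes "\<bar>x\<bar> \<le> R"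
  shows "\<rho> t - 2 * \<rho> R - 4 * C \<le> \<rho> (x - t) - \<rho> x"
proof -
  have "\<rho> t \<le> \<rho> (t - x) + \<rho> x + C"
    using quasi_subadditive[of "t - x" x] by simp
  moreover have "\<rho> (t - x) \<le> \<rho> (x - t) + C"
    by (rule quasi_mono) simp
  moreover have "\<rho> x \<le> \<rho> R + C"
    using assms by (intro quasi_mono) simp
  ultimately show ?thesis
    by linarith
qed

lemma loss_shift_outlier: "- \<rho> t - C \<le> \<rho> (x - t) - \<rho> x"
  using quasi_subadditive[of "x - t" t] by simp

lemma loss_far_outlier:
  assumes "\<bar>t\<bar> \<le> Q" and "u \<ge> 0"
  shows "\<rho> u - C \<le> \<rho> (Q + u - t)"
  using quasi_mono[of u "Q + u - t"] assms by (simp add: abs_le_iff)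

lemma loss_far_inlier:
  assumes "\<bar>y\<bar> \<le> R" and "Q \<ge> 0" and "u \<ge> 0"
  shows "\<rho> (y - (Q + u)) \<le> \<rho> u + \<rho> (R + Q) + 2 * C"
proof -
  have "\<rho> (y - (Q + u)) \<le> \<rho> (u + (R + Q)) + C"
    using assms by (intro quasi_mono) simp
  then show ?thesis
    using quasi_subadditive[of u "R + Q"] by simp
qed

lemma M_estimate_loss_bound:
  assumes T: "is_M_estimator \<rho> T" and X': "X' \<in> replacements Y m"
    and few: "2 * m < length Y" and R: "\<forall>y\<in>set Y. \<bar>y\<bar> \<le> R"
  shows "\<rho> (T X') \<le> real (length Y) * (2 * \<rho> R + 4 * C)"
proof -
  define n where "n = length Y"
  define t where "t = T X'"
  define Out where "Out = {i. i < n \<and> X' ! i \<noteq> Y ! i}"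
  define In where "In = {..<n} - Out"
  define a where "a = 2 * \<rho> R + 4 * C"
  have len: "length X' = n" and card_Out: "card Out \<le> m"
    using X' by (simp_all add: replacements_def n_def Out_def)
  have "Out \<subseteq> {..<n}"
    by (auto simp: Out_def)
  then have card_In: "card In + card Out = n"
    unfolding In_def using card_Diff_subset[of Out "{..<n}"] card_mono[of "{..<n}" Out]
    by (simp add: finite_subset)
  have "real (card In) * (\<rho> t - a) + real (card Out) * (- \<rho> t - C)
      \<le> (\<Sum>i\<in>In. \<rho> (X' ! i - t) - \<rho> (X' ! i)) + (\<Sum>i\<in>Out. \<rho> (X' ! i - t) - \<rho> (X' ! i))"
  proof (intro add_mono sum_bounded_below)
    fix i assume "i \<in> In"
    then have "X' ! i = Y ! i" "i < length Y"
      by (auto simp: In_def Out_def n_def)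
    then have "\<bar>X' ! i\<bar> \<le> R"
      using R by simp
    then show "\<rho> t - a \<le> \<rho> (X' ! i - t) - \<rho> (X' ! i)"
      using loss_shift_inlier[of "X' ! i" R t] by (simp add: a_def)
  qed (rule loss_shift_outlier)
  also have "\<dots> = (\<Sum>i<n. \<rho> (X' ! i - t) - \<rho> (X' ! i))"
    unfolding In_def by (rule sum.subset_diff[OF \<open>Out \<subseteq> {..<n}\<close> finite_lessThan, symmetric])
  also have "\<dots> = M_objective \<rho> X' t - M_objective \<rho> X' 0"
    by (simp add: M_objective_nth len sum_subtractf)
  also have "\<dots> \<le> 0"
    using T by (simp add: is_M_estimator_def t_def)
  finally have "real (card In) * (\<rho> t - a) \<le> real (card Out) * (\<rho> t + C)"
    by (simp add: algebra_simps)
  then have "\<rho> t \<le> real (card In) * a + real (card Out) * C"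
    using card_In card_Out few nonneg by (intro majority_weight_bound) (auto simp: n_def)
  also have "\<dots> \<le> real (card In) * a + real (card Out) * a"
    using C_nonneg nonneg[of R] by (intro add_left_mono mult_left_mono) (auto simp: a_def)
  also have "\<dots> = real n * a"
    unfolding card_In[symmetric] by (simp add: distrib_right)
  finally show ?thesis
    by (simp add: t_def n_def a_def)
qed

lemma M_estimator_bounded_under_minority:
  assumes "is_M_estimator \<rho> T" and "2 * m < length Y"
  shows "bdd_above ((\<lambda>X'. \<bar>T X'\<bar>) ` replacements Y m)"
proof -
  obtain R where R: "\<forall>y\<in>set Y. \<bar>y\<bar> \<le> R"
    using abs_bounded_list by blast
  obtain M where M: "\<And>u. \<rho> u \<le> real (length Y) * (2 * \<rho> R + 4 * C) \<Longrightarrow> \<bar>u\<bar> \<le> M"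
    using coercive by blast
  show ?thesis
    using M[OF M_estimate_loss_bound[OF assms(1) _ assms(2) R]] by (intro bdd_aboveI2)
qed

lemma M_estimate_prefix_contamination:
  fixes Y :: "real list" and m :: nat and Q u :: real
  defines "X' \<equiv> map (\<lambda>i. if i < m then Q + u else Y ! i) [0..<length Y]"
  assumes T: "is_M_estimator \<rho> T" and m: "m \<le> length Y" and R: "\<forall>y\<in>set Y. \<bar>y\<bar> \<le> R"
    and "Q \<ge> 0" and "u \<ge> 0" and T_le: "\<bar>T X'\<bar> \<le> Q"
  shows "real m * (\<rho> u - C) \<le> real (length Y - m) * (\<rho> u + (\<rho> (R + Q) + 2 * C))"
proof -
  define n where "n = length Y"
  have len: "length X' = n" and split: "{..<n} = {..<m} \<union> {m..<n}" "{..<m} \<inter> {m..<n} = {}"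
    using m by (auto simp: X'_def n_def)
  have X'_prefix: "i < m \<Longrightarrow> X' ! i = Q + u" for i
    using m by (simp add: X'_def n_def)
  have X'_suffix: "m \<le> i \<Longrightarrow> i < n \<Longrightarrow> X' ! i = Y ! i" for i
    by (simp add: X'_def n_def)
  have objective_split: "M_objective \<rho> X' s
      = (\<Sum>i<m. \<rho> (X' ! i - s)) + (\<Sum>i\<in>{m..<n}. \<rho> (X' ! i - s))" for s
    by (simp add: M_objective_nth len split sum.union_disjoint)
  have "\<rho> u - C \<le> \<rho> (X' ! i - T X')" if "i < m" for i
    using that loss_far_outlier[OF T_le \<open>u \<ge> 0\<close>] by (simp add: X'_prefix)
  then have "real m * (\<rho> u - C) \<le> (\<Sum>i<m. \<rho> (X' ! i - T X'))"
    using sum_bounded_below[of "{..<m}" "\<rho> u - C" "\<lambda>i. \<rho> (X' ! i - T X')"] by simp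
  also have "\<dots> \<le> M_objective \<rho> X' (T X')"
    by (simp add: objective_split sum_nonneg nonneg)
  also have "\<dots> \<le> M_objective \<rho> X' (Q + u)"
    using T by (simp add: is_M_estimator_def)
  also have "\<dots> = (\<Sum>i\<in>{m..<n}. \<rho> (Y ! i - (Q + u)))"
    by (simp add: objective_split X'_prefix X'_suffix zero)
  also have "\<dots> \<le> real (n - m) * (\<rho> u + (\<rho> (R + Q) + 2 * C))"
  proof -
    have "\<rho> (Y ! i - (Q + u)) \<le> \<rho> u + (\<rho> (R + Q) + 2 * C)" if "i \<in> {m..<n}" for i
      using that R assms(5,6) loss_far_inlier[of "Y ! i" R Q u] by (simp add: n_def add.assoc)
    then show ?thesis
      using sum_bounded_above[of "{m..<n}" "\<lambda>i. \<rho> (Y ! i - (Q + u))"] by simp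
  qed
  finally show ?thesis
    by (simp add: n_def)
qed

lemma M_estimator_unbounded_under_majority:
  assumes T: "is_M_estimator \<rho> T" and many: "length Y < 2 * m" and m: "m \<le> length Y"
  shows "\<not> bdd_above ((\<lambda>X'. \<bar>T X'\<bar>) ` replacements Y m)"
proof
  assume "bdd_above ((\<lambda>X'. \<bar>T X'\<bar>) ` replacements Y m)"
  then obtain Q' where "\<And>X'. X' \<in> replacements Y m \<Longrightarrow> \<bar>T X'\<bar> \<le> Q'"
    by (auto simp: bdd_above_def)
  then obtain Q where Q: "\<And>X'. X' \<in> replacements Y m \<Longrightarrow> \<bar>T X'\<bar> \<le> Q" and "Q \<ge> 0"
    by (meson max.cobounded1 max.cobounded2 order_trans)
  obtain R where R: "\<forall>y\<in>set Y. \<bar>y\<bar> \<le> R"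
    using abs_bounded_list by blast
  define P where "P = \<rho> (R + Q) + 2 * C"
  obtain u where "u > 0" and u_large: "real (length Y) * P < \<rho> u"
    using exists_large_loss by blast
  have "real m * (\<rho> u - C) \<le> real (length Y - m) * (\<rho> u + P)"
    unfolding P_def using \<open>Q \<ge> 0\<close> \<open>u > 0\<close>
    by (intro M_estimate_prefix_contamination[OF T m R] Q[OF replace_prefix_in_replacements[OF m]]) auto
  then have "\<rho> u \<le> real m * C + real (length Y - m) * P"
    using many m nonneg by (intro majority_weight_bound) auto
  also have "\<dots> \<le> real (length Y) * P"
    using mult_left_mono[of C P "real m"] nonneg[of "R + Q"] C_nonneg m
    by (simp add: P_def of_nat_diff algebra_simps)
  finally show False
    using u_large by simp
qed

lemma breakdown_point_bounds:
  assumes T: "is_M_estimator \<rho> T" and n: "length X > 0"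
  shows "1 / 2 \<le> breakdown_point T X" and "breakdown_point T X \<le> 1 / 2 + 1 / real (length X)"
proof -
  define n where "n = length X"
  define S where "S = {real m / real n | m.
      m \<le> n \<and> \<not> bdd_above ((\<lambda>X'. \<bar>T X'\<bar>) ` replacements X m)}"
  have bp: "breakdown_point T X = Inf S"
    by (simp add: breakdown_point_def S_def n_def)
  have S_ge: "1 / 2 \<le> x" if x: "x \<in> S" for x
  proof -
    obtain m where x_eq: "x = real m / real n"
      and unbounded: "\<not> bdd_above ((\<lambda>X'. \<bar>T X'\<bar>) ` replacements X m)"
      using x unfolding S_def mem_Collect_eq by (elim exE conjE) (rule that)
    have "real n \<le> 2 * real m"
      using M_estimator_bounded_under_minority[OF T] unbounded by (force simp: n_def)
    then show ?thesis
      unfolding x_eq using n by (simp add: n_def field_simps)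
  qed
  define m0 where "m0 = n div 2 + 1"
  have m0: "m0 \<le> n" "n < 2 * m0" "2 * m0 \<le> n + 2"
    using n unfolding m0_def n_def by presburger+
  then have m0_S: "real m0 / real n \<in> S"
    unfolding S_def using M_estimator_unbounded_under_majority[OF T] by (auto simp: n_def)
  show "1 / 2 \<le> breakdown_point T X"
    unfolding bp using m0_S S_ge by (intro cInf_greatest) auto
  have "Inf S \<le> real m0 / real n"
    using m0_S S_ge by (intro cInf_lower bdd_belowI[of _ "1 / 2"]) auto
  also have "\<dots> \<le> 1 / 2 + 1 / real n"
    using m0(3) n by (simp add: n_def field_simps)
  finally show "breakdown_point T X \<le> 1 / 2 + 1 / real (length X)"
    by (simp add: bp n_def)
qed

lemma breakdown_point_tendsto_half:
  assumes T: "is_M_estimator \<rho> T" and len: "\<And>n. length (X n) = n"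
  shows "(\<lambda>n. breakdown_point T (X n)) \<longlonglongrightarrow> 1 / 2"
proof (rule tendsto_sandwich)
  have "1 / 2 \<le> breakdown_point T (X n) \<and> breakdown_point T (X n) \<le> 1 / 2 + 1 / real n"
    if "n \<ge> 1" for n
    using breakdown_point_bounds[OF T, of "X n"] that by (simp add: len)
  then show "\<forall>\<^sub>F n in sequentially. 1 / 2 \<le> breakdown_point T (X n)"
    and "\<forall>\<^sub>F n in sequentially. breakdown_point T (X n) \<le> 1 / 2 + 1 / real n"
    by (auto intro: eventually_sequentiallyI[of 1])
  show "(\<lambda>n. 1 / 2 + 1 / real n) \<longlonglongrightarrow> 1 / 2"
    using tendsto_add[OF tendsto_const lim_inverse_n] by (simp add: inverse_eq_divide)
qed simp

end

lemma rho_ESt_coercive_subadditive_loss: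
  assumes nu: "nu > 0" and eps: "\<bar>eps\<bar> < 1"
  shows "coercive_subadditive_loss (rho_ESt nu eps)
           ((nu + 1) / 2 * (2 * ln ((1 + \<bar>eps\<bar>)\<^sup>2 / (1 - \<bar>eps\<bar>)\<^sup>2) + ln 2))"
proof -
  define c where "c = (nu + 1) / 2"
  define K_lo K_hi where "K_lo = nu * (1 - \<bar>eps\<bar>)\<^sup>2" and "K_hi = nu * (1 + \<bar>eps\<bar>)\<^sup>2"
  define D where "D = ln (K_hi / K_lo)"
  have c: "c > 0"
    using nu by (simp add: c_def)
  have K: "0 < K_lo" "K_lo \<le> K_hi"
    using nu eps by (auto simp: K_lo_def K_hi_def intro!: power_mono)
  have "K_hi / K_lo \<ge> 1"
    using K by simp
  then have cD: "c * D \<ge> 0" "c * ln 2 \<ge> 0"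
    using c by (simp_all add: D_def)
  have C_eq: "(nu + 1) / 2 * (2 * ln ((1 + \<bar>eps\<bar>)\<^sup>2 / (1 - \<bar>eps\<bar>)\<^sup>2) + ln 2)
      = c * (2 * D + ln 2)"
    using nu by (simp add: c_def D_def K_lo_def K_hi_def)
  have lower: "c * student_loss K_hi u \<le> rho_ESt nu eps u"
    and upper: "rho_ESt nu eps u \<le> c * student_loss K_lo u" for u
    using rho_ESt_bounds[OF nu eps] by (simp_all add: c_def K_lo_def K_hi_def)
  have gap: "c * student_loss K_lo u \<le> c * student_loss K_hi u + c * D" for u
  proof -
    have "student_loss K_lo u \<le> student_loss K_hi u + D"
      using student_loss_le_scale[OF K, of u] by (simp add: D_def)
    then show ?thesis
      using c by (simp add: mult_left_mono flip: distrib_left)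
  qed
  show ?thesis
    unfolding C_eq
  proof unfold_locales
    fix u v B :: real
    have "0 \<le> c * student_loss K_hi u"
      using K c by (simp add: student_loss_nonneg)
    then show "rho_ESt nu eps u \<ge> 0"
      using lower[of u] by linarith
    show "rho_ESt nu eps 0 = 0"
      by (simp add: rho_ESt_def)
    show "rho_ESt nu eps u \<le> rho_ESt nu eps v + c * (2 * D + ln 2)" if "\<bar>u\<bar> \<le> \<bar>v\<bar>"
    proof -
      have "c * student_loss K_lo u \<le> c * student_loss K_lo v"
        using that K c by (intro mult_left_mono student_loss_mono) auto
      then show ?thesis
        using upper[of u] lower[of v] gap[of v] cD unfolding distrib_left by linarith
    qed
    have "c * student_loss K_lo (u + v)
        \<le> c * student_loss K_lo u + c * student_loss K_lo v + c * ln 2"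
      using mult_left_mono[OF student_loss_add_le[OF K(1), of u v]] c by (simp add: distrib_left)
    then show "rho_ESt nu eps (u + v) \<le> rho_ESt nu eps u + rho_ESt nu eps v + c * (2 * D + ln 2)"
      using upper[of "u + v"] lower[of u] lower[of v] gap[of u] gap[of v]
      unfolding distrib_left by linarith
    show "\<exists>M. \<forall>u. rho_ESt nu eps u \<le> B \<longrightarrow> \<bar>u\<bar> \<le> M"
    proof (intro exI allI impI)
      fix u assume "rho_ESt nu eps u \<le> B"
      then have "student_loss K_hi u \<le> B / c"
        using lower[of u] c by (simp add: field_simps)
      then show "\<bar>u\<bar> \<le> sqrt (K_hi * exp (B / c))"
        using K by (intro student_loss_le_imp_abs_le) auto
    qed
  qed
qed

theorem corollary3p6:
  fixes nu sigma eps :: real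
    and T :: "real list \<Rightarrow> real"
    and X :: "nat \<Rightarrow> real list"
  assumes "nu > 0" and "sigma > 0" and "-1 < eps" and "eps < 1"
    and "is_mle_location_estimator nu sigma eps T"
    and "\<And>n. length (X n) = n"
  shows "(\<lambda>n. breakdown_point T (X n)) \<longlonglongrightarrow> 1 / 2"
proof -
  have "\<bar>eps\<bar> < 1"
    using assms(3,4) by linarith
  then obtain C where "coercive_subadditive_loss (rho_ESt nu eps) C"
    using rho_ESt_coercive_subadditive_loss[OF assms(1)] by blast
  then have "coercive_subadditive_loss (\<lambda>v. rho_ESt nu eps (v / sigma)) C"
    using assms(2) by (rule coercive_subadditive_loss.rescale)
  moreover have "is_M_estimator (\<lambda>v. rho_ESt nu eps (v / sigma)) T"
    using assms(5) by (simp add: is_mle_location_estimator_iff)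
  ultimately show ?thesis
    using assms(6) by (rule coercive_subadditive_loss.breakdown_point_tendsto_half)
qed

end
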